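(* Let $\alpha$ be an algebraic number of degree $3$ with conjugates $\alpha_1 = \alpha, \alpha_2, \alpha_3$. For a prime $q$, fix $q$-th roots $\alpha_1^{1/q},\alpha_2^{1/q},\alpha_3^{1/q}$ and a primitive $q$-th root of unity $\zeta_q$, let $K_q = \mathbb{Q}(\zeta_q, \alpha_1^{1/q}, \alpha_2^{1/q}, \alpha_3^{1/q})$, and let $C$ be the set of $\sigma \in \textup{Gal}(K_q/\mathbb{Q})$ such that: $\sigma(\zeta_q) = \zeta_q^{-1}$; there exist distinct $i,j \in \{1,2,3\}$ with $\sigma(\alpha_i) = \alpha_j$ and $\sigma(\alpha_j) = \alpha_i$; and for these $i,j$, $\sigma(\sigma(\alpha_i^{1/q})) = \alpha_i^{1/q}$ and $\sigma(\sigma(\alpha_j^{1/q})) = \alpha_j^{1/q}$. Then $|C| \ll q^2$. If moreover $|N(\alpha)| = 1$, then $|C| \ll q$.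
   Context: $N(\alpha)$ denotes the norm of $\alpha$ over $\mathbb{Q}$. The implied constants may depend on $\alpha$ but not on $q$. *)

theory Defs
  imports Complex_Main "HOL-Computational_Algebra.Polynomial"
    "HOL-Computational_Algebra.Polynomial_Factorial"
begin

text \<open>The subfield of the complex numbers generated by a set S
  (it automatically contains the rationals).\<close>
definition gen_subfield :: "complex set \<Rightarrow> complex set" where
  "gen_subfield S = \<Inter>{F. S \<subseteq> F \<and> 0 \<in> F \<and> 1 \<in> F \<and>
      (\<forall>x\<in>F. \<forall>y\<in>F. x + y \<in> F \<and> x * y \<in> F) \<and>
      (\<forall>x\<in>F. - x \<in> F \<and> inverse x \<in> F)}"

text \<open>Field automorphisms of a subfield K of the complex numbers (these fix the
  rationals automatically), normalised to be the identity outside K so that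
  each automorphism has a unique representative. For K normal over the rationals
  this is the Galois group Gal(K/Q).\<close>
definition field_auts :: "complex set \<Rightarrow> (complex \<Rightarrow> complex) set" where
  "field_auts K = {\<sigma>. bij_betw \<sigma> K K \<and>
      (\<forall>x\<in>K. \<forall>y\<in>K. \<sigma> (x + y) = \<sigma> x + \<sigma> y \<and> \<sigma> (x * y) = \<sigma> x * \<sigma> y) \<and>
      \<sigma> 1 = 1 \<and> (\<forall>x. x \<notin> K \<longrightarrow> \<sigma> x = x)}"

text \<open>K_q = Q(zeta, b 1, b 2, b 3) where b i is the chosen q-th root of a i.\<close>
definition Kq :: "complex \<Rightarrow> (nat \<Rightarrow> complex) \<Rightarrow> complex set" where
  "Kq \<zeta> b = gen_subfield {\<zeta>, b 1, b 2, b 3}"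

definition setC :: "complex \<Rightarrow> (nat \<Rightarrow> complex) \<Rightarrow> (nat \<Rightarrow> complex) \<Rightarrow> (complex \<Rightarrow> complex) set" where
  "setC \<zeta> a b = {\<sigma> \<in> field_auts (Kq \<zeta> b). \<sigma> \<zeta> = inverse \<zeta> \<and>
      (\<exists>i\<in>{1,2,3}. \<exists>j\<in>{1,2,3}. i \<noteq> j \<and> \<sigma> (a i) = a j \<and> \<sigma> (a j) = a i \<and>
         \<sigma> (\<sigma> (b i)) = b i \<and> \<sigma> (\<sigma> (b j)) = b j)}"

end

theory Submission
  imports Defs
begin

(* An automorphism of K_q is determined by its values on zeta_q and on the three roots
   b_n = alpha_n^(1/q).  Let sigma be in C, swapping alpha_i and alpha_j.  Then
   u = sigma(b_i) / b_j is a q-th root of unity, hence a power of zeta_q, so sigma(u) = 1/u;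
   with sigma(sigma(b_i)) = b_i this gives sigma(b_j) b_j = sigma(b_i) b_i.  As
   alpha_1 + alpha_2 + alpha_3 is rational, sigma fixes the third conjugate alpha_k, so
   sigma(b_k) is a q-th root of alpha_k.  Hence sigma is determined by the pair (i, j) and
   two q-th roots, and |C| <= 6 q^2.  If |N(alpha)| = 1 then N(alpha) = 1 or -1, and for odd
   q the same argument applied to b_1 b_2 b_3 gives sigma(b_1 b_2 b_3) = 1 / (b_1 b_2 b_3),
   which determines sigma(b_k) as well: |C| <= 6 q. *)

definition is_subfield :: "complex set \<Rightarrow> bool" where
  "is_subfield F \<longleftrightarrow> 0 \<in> F \<and> 1 \<in> F \<and> (\<forall>x\<in>F. \<forall>y\<in>F. x + y \<in> F \<and> x * y \<in> F) \<and>
      (\<forall>x\<in>F. - x \<in> F \<and> inverse x \<in> F)"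

lemma subset_gen_subfield: "S \<subseteq> gen_subfield S"
  unfolding gen_subfield_def by auto

lemma is_subfield_gen_subfield: "is_subfield (gen_subfield S)"
  unfolding is_subfield_def gen_subfield_def by auto

lemma gen_subfield_minimal: "S \<subseteq> F \<Longrightarrow> is_subfield F \<Longrightarrow> gen_subfield S \<subseteq> F"
  unfolding is_subfield_def gen_subfield_def by blast

lemma Rats_subset_subfield:
  assumes F: "is_subfield F"
  shows "\<rat> \<subseteq> F"
proof
  have nat: "of_nat n \<in> F" for n
    by (induction n) (use F in \<open>auto simp: is_subfield_def\<close>)
  have int: "of_int z \<in> F" for z
    by (cases z rule: int_cases) (use F nat in \<open>auto simp: is_subfield_def simp del: of_nat_Suc\<close>)
  fix x :: complex
  assume "x \<in> \<rat>"
  then obtain m n where "x = of_int m * inverse (of_int n)"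
    by (metis Rats_cases' divide_inverse)
  with F int show "x \<in> F"
    unfolding is_subfield_def by simp
qed

locale subfield_aut =
  fixes K :: "complex set" and \<sigma> :: "complex \<Rightarrow> complex"
  assumes subfield: "is_subfield K" and aut: "\<sigma> \<in> field_auts K"
begin

lemma zero_mem: "0 \<in> K" and one_mem: "1 \<in> K"
  and add_mem: "x \<in> K \<Longrightarrow> y \<in> K \<Longrightarrow> x + y \<in> K"
  and mult_mem: "x \<in> K \<Longrightarrow> y \<in> K \<Longrightarrow> x * y \<in> K"
  and uminus_mem: "x \<in> K \<Longrightarrow> - x \<in> K"
  and inverse_mem: "x \<in> K \<Longrightarrow> inverse x \<in> K"
  using subfield unfolding is_subfield_def by auto

lemma diff_mem: "x \<in> K \<Longrightarrow> y \<in> K \<Longrightarrow> x - y \<in> K"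
  using add_mem uminus_mem by (metis diff_conv_add_uminus)

lemma divide_mem: "x \<in> K \<Longrightarrow> y \<in> K \<Longrightarrow> x / y \<in> K"
  using mult_mem inverse_mem by (metis divide_inverse)

lemma power_mem: "x \<in> K \<Longrightarrow> x ^ n \<in> K"
  by (induction n) (auto intro: one_mem mult_mem)

lemma hom_add: "x \<in> K \<Longrightarrow> y \<in> K \<Longrightarrow> \<sigma> (x + y) = \<sigma> x + \<sigma> y"
  and hom_mult: "x \<in> K \<Longrightarrow> y \<in> K \<Longrightarrow> \<sigma> (x * y) = \<sigma> x * \<sigma> y"
  and hom_one: "\<sigma> 1 = 1"
  and bij: "bij_betw \<sigma> K K"
  and fixes_outside: "x \<notin> K \<Longrightarrow> \<sigma> x = x"
  using aut unfolding field_auts_def by auto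

lemma map_mem: "x \<in> K \<Longrightarrow> \<sigma> x \<in> K"
  using bij by (auto simp: bij_betw_def)

lemma hom_zero: "\<sigma> 0 = 0"
  using hom_add[OF zero_mem zero_mem] by simp

lemma hom_uminus: "x \<in> K \<Longrightarrow> \<sigma> (- x) = - \<sigma> x"
  using hom_add[OF uminus_mem, of x x] hom_zero by (simp add: eq_neg_iff_add_eq_0)

lemma hom_diff: "x \<in> K \<Longrightarrow> y \<in> K \<Longrightarrow> \<sigma> (x - y) = \<sigma> x - \<sigma> y"
  using hom_add[OF _ uminus_mem] hom_uminus by (simp flip: diff_conv_add_uminus)

lemma hom_inverse: "x \<in> K \<Longrightarrow> \<sigma> (inverse x) = inverse (\<sigma> x)"
proof (cases "x = 0")
  case False
  assume x: "x \<in> K"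
  have "\<sigma> x * \<sigma> (inverse x) = 1"
    using hom_mult[OF x inverse_mem[OF x]] False hom_one by simp
  then show ?thesis
    by (simp add: inverse_unique)
qed (simp add: hom_zero)

lemma hom_power: "x \<in> K \<Longrightarrow> \<sigma> (x ^ n) = \<sigma> x ^ n"
  by (induction n) (simp_all add: hom_one hom_mult power_mem)

end

lemma id_field_auts: "id \<in> field_auts K"
  unfolding field_auts_def by simp

lemma is_subfield_aut_equalizer:
  assumes "subfield_aut K \<sigma>" "subfield_aut K \<tau>"
  shows "is_subfield {x \<in> K. \<sigma> x = \<tau> x}"
proof -
  interpret s: subfield_aut K \<sigma> by fact
  interpret t: subfield_aut K \<tau> by fact
  show ?thesis
    unfolding is_subfield_def
    by (auto simp: s.zero_mem s.one_mem s.add_mem s.mult_mem s.uminus_mem s.inverse_mem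
        s.hom_zero s.hom_one s.hom_add s.hom_mult s.hom_uminus s.hom_inverse
        t.hom_zero t.hom_one t.hom_add t.hom_mult t.hom_uminus t.hom_inverse)
qed

lemma (in subfield_aut) fixes_Rats: "x \<in> \<rat> \<Longrightarrow> \<sigma> x = x"
  using Rats_subset_subfield[OF is_subfield_aut_equalizer, of K \<sigma> id]
    subfield_aut_axioms subfield id_field_auts
  unfolding subfield_aut_def by auto

lemma field_auts_eqI:
  assumes "\<sigma> \<in> field_auts (gen_subfield S)" "\<tau> \<in> field_auts (gen_subfield S)"
    and "\<And>s. s \<in> S \<Longrightarrow> \<sigma> s = \<tau> s"
  shows "\<sigma> = \<tau>"
proof
  fix x
  have auts: "subfield_aut (gen_subfield S) \<sigma>" "subfield_aut (gen_subfield S) \<tau>"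
    using assms(1,2) is_subfield_gen_subfield by (auto intro: subfield_aut.intro)
  have "gen_subfield S \<subseteq> {x \<in> gen_subfield S. \<sigma> x = \<tau> x}"
    using assms(3) subset_gen_subfield
    by (intro gen_subfield_minimal is_subfield_aut_equalizer auts) auto
  then show "\<sigma> x = \<tau> x"
    using subfield_aut.fixes_outside[OF auts(1)] subfield_aut.fixes_outside[OF auts(2)]
    by (cases "x \<in> gen_subfield S") auto
qed

lemma card_nth_roots_le: "0 < n \<Longrightarrow> card {z::complex. z ^ n = c} \<le> n"
  by (cases "c = 0") (simp_all add: card_nth_roots)

definition primitive_root_unity :: "nat \<Rightarrow> complex \<Rightarrow> bool" where
  "primitive_root_unity q \<zeta> \<longleftrightarrow> \<zeta> ^ q = 1 \<and> (\<forall>k. 0 < k \<and> k < q \<longrightarrow> \<zeta> ^ k \<noteq> 1)"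

lemma root_unity_power_of_primitive:
  assumes q: "0 < q" and \<zeta>: "primitive_root_unity q \<zeta>" and u: "u ^ q = 1"
  obtains m where "u = \<zeta> ^ m"
proof -
  have "\<zeta> \<noteq> 0"
    using \<zeta> q by (auto simp: primitive_root_unity_def zero_power)
  have "inj_on (\<lambda>m. \<zeta> ^ m) {..<q}"
  proof (rule linorder_inj_onI')
    fix m n :: nat
    assume "m \<in> {..<q}" "n \<in> {..<q}" "m < n"
    then have "\<zeta> ^ (n - m) \<noteq> 1"
      using \<zeta> by (auto simp: primitive_root_unity_def)
    moreover have "\<zeta> ^ n = \<zeta> ^ m * \<zeta> ^ (n - m)"
      using \<open>m < n\<close> by (simp flip: power_add)
    ultimately show "\<zeta> ^ m \<noteq> \<zeta> ^ n"
      using \<open>\<zeta> \<noteq> 0\<close> by auto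
  qed
  moreover have "(\<lambda>m. \<zeta> ^ m) ` {..<q} \<subseteq> {z. z ^ q = 1}"
    using \<zeta> by (auto simp: primitive_root_unity_def simp flip: power_mult
        simp: mult.commute[of _ q] power_mult)
  ultimately have "(\<lambda>m. \<zeta> ^ m) ` {..<q} = {z. z ^ q = 1}"
    using q by (intro card_subset_eq) (simp_all add: finite_roots_unity card_image card_roots_unity_eq)
  with u that show thesis
    by blast
qed

lemma (in subfield_aut) inverts_roots_unity:
  assumes q: "0 < q" and \<zeta>: "primitive_root_unity q \<zeta>" "\<zeta> \<in> K" "\<sigma> \<zeta> = inverse \<zeta>"
    and u: "u \<in> K" "u ^ q = 1"
  shows "\<sigma> u = inverse u"
proof -
  obtain m where "u = \<zeta> ^ m"
    using root_unity_power_of_primitive[OF q \<zeta>(1) u(2)] .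
  then show ?thesis
    using hom_power[OF \<zeta>(2)] \<zeta>(3) by (simp add: power_inverse)
qed

definition third :: "nat \<Rightarrow> nat \<Rightarrow> nat" where
  "third i j = 6 - i - j"

lemma index_set_eq_third:
  assumes "i \<in> {1,2,3}" "j \<in> {1,2,3}" "i \<noteq> j"
  shows "{1,2,3} = {i, j, third i j}"
  using assms by (auto simp: third_def)

lemma prod_third_index:
  fixes f :: "nat \<Rightarrow> 'a::comm_monoid_mult"
  assumes "i \<in> {1,2,3}" "j \<in> {1,2,3}" "i \<noteq> j"
  shows "f 1 * f 2 * f 3 = f i * f j * f (third i j)"
  using assms by (auto simp: third_def ac_simps)

definition swap_auts ::
    "complex \<Rightarrow> (nat \<Rightarrow> complex) \<Rightarrow> (nat \<Rightarrow> complex) \<Rightarrow> nat \<Rightarrow> nat \<Rightarrow> (complex \<Rightarrow> complex) set" where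
  "swap_auts \<zeta> a b i j = {\<sigma> \<in> field_auts (Kq \<zeta> b). \<sigma> \<zeta> = inverse \<zeta> \<and>
      \<sigma> (a i) = a j \<and> \<sigma> (a j) = a i \<and> \<sigma> (\<sigma> (b i)) = b i \<and> \<sigma> (\<sigma> (b j)) = b j}"

definition index_pairs :: "(nat \<times> nat) set" where
  "index_pairs = {(i, j) \<in> {1,2,3} \<times> {1,2,3}. i \<noteq> j}"

lemma index_pairs_explicit: "index_pairs = {(1,2), (1,3), (2,1), (2,3), (3,1), (3,2)}"
  by (auto simp: index_pairs_def)

lemma finite_index_pairs: "finite index_pairs"
  and card_index_pairs: "card index_pairs = 6"
  unfolding index_pairs_explicit by simp_all

lemma setC_eq_Union_swap_auts:
  "setC \<zeta> a b = (\<Union>(i, j) \<in> index_pairs. swap_auts \<zeta> a b i j)"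
  unfolding setC_def swap_auts_def index_pairs_def by blast

lemma card_setC_le:
  assumes "\<And>i j. (i, j) \<in> index_pairs \<Longrightarrow> card (swap_auts \<zeta> a b i j) \<le> B"
  shows "card (setC \<zeta> a b) \<le> 6 * B"
proof -
  have "card (setC \<zeta> a b) \<le> (\<Sum>(i, j) \<in> index_pairs. card (swap_auts \<zeta> a b i j))"
    unfolding setC_eq_Union_swap_auts
    by (rule order.trans[OF card_UN_le[OF finite_index_pairs]]) (simp add: case_prod_beta)
  also have "\<dots> \<le> card index_pairs * B"
    using sum_bounded_above[of index_pairs _ B] assms by (auto simp: case_prod_beta)
  finally show ?thesis
    by (simp add: card_index_pairs)
qed

locale kummer_generators =
  fixes q :: nat and \<zeta> :: complex and a b :: "nat \<Rightarrow> complex"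
  assumes q_pos: "0 < q" and primitive: "primitive_root_unity q \<zeta>"
    and root: "n \<in> {1,2,3} \<Longrightarrow> b n ^ q = a n"
    and trace_Rats: "a 1 + a 2 + a 3 \<in> \<rat>"
begin

lemma primitive_mem: "\<zeta> \<in> Kq \<zeta> b"
  and root_mem: "n \<in> {1,2,3} \<Longrightarrow> b n \<in> Kq \<zeta> b"
  using subset_gen_subfield[of "{\<zeta>, b 1, b 2, b 3}"] unfolding Kq_def by auto

end

locale swap_aut = kummer_generators +
  fixes \<sigma> :: "complex \<Rightarrow> complex" and i j :: nat
  assumes swap: "\<sigma> \<in> swap_auts \<zeta> a b i j"
    and i: "i \<in> {1,2,3}" and j: "j \<in> {1,2,3}" and i_neq_j: "i \<noteq> j"
begin

sublocale subfield_aut "Kq \<zeta> b" \<sigma>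
  using swap is_subfield_gen_subfield
  by unfold_locales (auto simp: swap_auts_def Kq_def)

lemma inverts_primitive: "\<sigma> \<zeta> = inverse \<zeta>"
  and swaps_roots: "\<sigma> (a i) = a j" "\<sigma> (a j) = a i"
  and involutive_on_roots: "\<sigma> (\<sigma> (b i)) = b i" "\<sigma> (\<sigma> (b j)) = b j"
  using swap by (auto simp: swap_auts_def)

lemma power_image_root: "n \<in> {1,2,3} \<Longrightarrow> \<sigma> (b n) ^ q = \<sigma> (a n)"
  using hom_power[OF root_mem] root by metis

lemma power_image_i: "\<sigma> (b i) ^ q = a j"
  using power_image_root[OF i] swaps_roots by simp

lemma root_power_mem: "n \<in> {1,2,3} \<Longrightarrow> a n \<in> Kq \<zeta> b"
  using power_mem[OF root_mem] root by metis

lemma power_image_third: "\<sigma> (b (third i j)) ^ q = a (third i j)"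
proof -
  let ?k = "third i j"
  have trace_mem: "a 1 + a 2 + a 3 \<in> Kq \<zeta> b"
    using Rats_subset_subfield[OF subfield] trace_Rats by blast
  have ak: "a ?k = (a 1 + a 2 + a 3) - a i - a j"
    using i j i_neq_j by (auto simp: third_def)
  have "\<sigma> (a ?k) = \<sigma> (a 1 + a 2 + a 3) - \<sigma> (a i) - \<sigma> (a j)"
    unfolding ak using trace_mem root_power_mem[OF i] root_power_mem[OF j]
    by (simp add: hom_diff diff_mem)
  also have "\<dots> = a ?k"
    using ak fixes_Rats[OF trace_Rats] swaps_roots by simp
  finally show ?thesis
    using power_image_root index_set_eq_third[OF i j i_neq_j] by (metis insertCI)
qed

lemma image_times_root_swap: "\<sigma> (b i) * b i = \<sigma> (b j) * b j"
proof (cases "b j = 0")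
  case True
  then have "\<sigma> (b i) = 0"
    using power_image_i root[OF j] q_pos by (metis power_eq_0_iff)
  with True show ?thesis
    by (simp add: hom_zero)
next
  case False
  define u where "u = \<sigma> (b i) / b j"
  have u_mem: "u \<in> Kq \<zeta> b"
    unfolding u_def using i j by (simp add: divide_mem map_mem root_mem)
  have "u ^ q = 1"
    using power_image_i False unfolding root[OF j, symmetric] by (simp add: u_def power_divide)
  then have "\<sigma> u = inverse u" and "u \<noteq> 0"
    using inverts_roots_unity[OF q_pos primitive primitive_mem inverts_primitive u_mem] q_pos
    by (auto simp: zero_power)
  have "b i = \<sigma> (u * b j)"
    using involutive_on_roots(1) False by (simp add: u_def)
  also have "\<dots> = \<sigma> (b j) / u"
    using hom_mult[OF u_mem root_mem[OF j]] \<open>\<sigma> u = inverse u\<close> by (simp add: field_simps)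
  finally have "\<sigma> (b j) = u * b i"
    using \<open>u \<noteq> 0\<close> by (simp add: field_simps)
  then show ?thesis
    using False by (simp add: u_def)
qed

lemma image_product_times_product:
  assumes "odd q" and norm: "a 1 * a 2 * a 3 \<in> {1, -1}"
  shows "\<sigma> (b 1) * \<sigma> (b 2) * \<sigma> (b 3) * (b 1 * b 2 * b 3) = 1"
proof -
  define w where "w = b 1 * b 2 * b 3"
  have w_mem: "w \<in> Kq \<zeta> b"
    unfolding w_def by (simp add: mult_mem root_mem)
  have wq: "w ^ q = a 1 * a 2 * a 3"
    unfolding w_def by (simp add: power_mult_distrib root)
  have "\<sigma> w = inverse w"
  proof (cases "w ^ q = 1")
    case True
    then show ?thesis
      using inverts_roots_unity[OF q_pos primitive primitive_mem inverts_primitive w_mem] by simp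
  next
    case False
    then have "(- w) ^ q = 1"
      using wq norm \<open>odd q\<close> by (auto simp: power_minus_odd)
    then have "\<sigma> (- w) = inverse (- w)"
      using inverts_roots_unity[OF q_pos primitive primitive_mem inverts_primitive uminus_mem[OF w_mem]]
      by simp
    then show ?thesis
      using hom_uminus[OF w_mem] by simp
  qed
  moreover have "w \<noteq> 0"
    using wq norm q_pos by (auto simp: zero_power)
  ultimately have "\<sigma> w * w = 1"
    by simp
  moreover have "\<sigma> w = \<sigma> (b 1) * \<sigma> (b 2) * \<sigma> (b 3)"
    unfolding w_def by (simp add: hom_mult mult_mem root_mem)
  ultimately show ?thesis
    unfolding w_def by simp
qed

end

context kummer_generators
begin

lemma swap_autI:
  assumes "\<sigma> \<in> swap_auts \<zeta> a b i j" "i \<in> {1,2,3}" "j \<in> {1,2,3}" "i \<noteq> j"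
  shows "swap_aut q \<zeta> a b \<sigma> i j"
  by (intro swap_aut.intro kummer_generators_axioms swap_aut_axioms.intro assms)

lemma swap_auts_agree_on_j:
  assumes \<sigma>: "swap_aut q \<zeta> a b \<sigma> i j" and \<tau>: "swap_aut q \<zeta> a b \<tau> i j"
    and eq_i: "\<sigma> (b i) = \<tau> (b i)"
  shows "\<sigma> (b j) = \<tau> (b j)"
proof -
  interpret s: swap_aut q \<zeta> a b \<sigma> i j by fact
  interpret t: swap_aut q \<zeta> a b \<tau> i j by fact
  show ?thesis
  proof (cases "b j = 0")
    case True
    then show ?thesis
      by (simp add: s.hom_zero t.hom_zero)
  next
    case False
    then show ?thesis
      using s.image_times_root_swap t.image_times_root_swap eq_i by simp
  qed
qed

lemma swap_auts_eqI:
  assumes \<sigma>: "swap_aut q \<zeta> a b \<sigma> i j" and \<tau>: "swap_aut q \<zeta> a b \<tau> i j"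
    and eq_i: "\<sigma> (b i) = \<tau> (b i)" and eq_k: "\<sigma> (b (third i j)) = \<tau> (b (third i j))"
  shows "\<sigma> = \<tau>"
proof (rule field_auts_eqI)
  interpret s: swap_aut q \<zeta> a b \<sigma> i j by fact
  interpret t: swap_aut q \<zeta> a b \<tau> i j by fact
  show "\<sigma> \<in> field_auts (gen_subfield {\<zeta>, b 1, b 2, b 3})"
    "\<tau> \<in> field_auts (gen_subfield {\<zeta>, b 1, b 2, b 3})"
    using s.aut t.aut unfolding Kq_def .
  have "\<sigma> (b n) = \<tau> (b n)" if "n \<in> {i, j, third i j}" for n
    using that eq_i eq_k swap_auts_agree_on_j[OF \<sigma> \<tau> eq_i] by blast
  then have "\<sigma> (b n) = \<tau> (b n)" if "n \<in> {1, 2, 3}" for n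
    using that index_set_eq_third[OF s.i s.j s.i_neq_j] by blast
  then have "\<sigma> (b 1) = \<tau> (b 1)" "\<sigma> (b 2) = \<tau> (b 2)" "\<sigma> (b 3) = \<tau> (b 3)"
    by simp_all
  then show "\<sigma> x = \<tau> x" if "x \<in> {\<zeta>, b 1, b 2, b 3}" for x
    using that s.inverts_primitive t.inverts_primitive by auto
qed

lemma card_swap_auts_le_square:
  assumes ij: "i \<in> {1,2,3}" "j \<in> {1,2,3}" "i \<noteq> j"
  shows "card (swap_auts \<zeta> a b i j) \<le> q ^ 2"
proof -
  let ?k = "third i j"
  let ?roots = "\<lambda>c. {z. z ^ q = c}"
  have "inj_on (\<lambda>\<sigma>. (\<sigma> (b i), \<sigma> (b ?k))) (swap_auts \<zeta> a b i j)"
  proof (rule inj_onI)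
    fix \<sigma> \<tau>
    assume \<sigma>: "\<sigma> \<in> swap_auts \<zeta> a b i j" and \<tau>: "\<tau> \<in> swap_auts \<zeta> a b i j"
      and eq: "(\<sigma> (b i), \<sigma> (b ?k)) = (\<tau> (b i), \<tau> (b ?k))"
    show "\<sigma> = \<tau>"
      using eq by (intro swap_auts_eqI[OF swap_autI[OF \<sigma> ij] swap_autI[OF \<tau> ij]]) simp_all
  qed
  moreover have "(\<lambda>\<sigma>. (\<sigma> (b i), \<sigma> (b ?k))) ` swap_auts \<zeta> a b i j \<subseteq> ?roots (a j) \<times> ?roots (a ?k)"
    using swap_aut.power_image_i swap_aut.power_image_third swap_autI ij by blast
  ultimately have "card (swap_auts \<zeta> a b i j) \<le> card (?roots (a j) \<times> ?roots (a ?k))"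
    using q_pos by (intro card_inj_on_le) auto
  also have "\<dots> \<le> q * q"
    unfolding card_cartesian_product by (intro mult_le_mono card_nth_roots_le q_pos)
  finally show ?thesis
    by (simp add: power2_eq_square)
qed

lemma card_swap_auts_le:
  assumes ij: "i \<in> {1,2,3}" "j \<in> {1,2,3}" "i \<noteq> j"
    and "odd q" and norm: "a 1 * a 2 * a 3 \<in> {1, -1}"
  shows "card (swap_auts \<zeta> a b i j) \<le> q"
proof -
  let ?k = "third i j"
  have "inj_on (\<lambda>\<sigma>. \<sigma> (b i)) (swap_auts \<zeta> a b i j)"
  proof (rule inj_onI)
    fix \<sigma> \<tau>
    assume "\<sigma> \<in> swap_auts \<zeta> a b i j" "\<tau> \<in> swap_auts \<zeta> a b i j" and eq_i: "\<sigma> (b i) = \<tau> (b i)"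
    then have \<sigma>: "swap_aut q \<zeta> a b \<sigma> i j" and \<tau>: "swap_aut q \<zeta> a b \<tau> i j"
      using swap_autI ij by auto
    have eq_j: "\<sigma> (b j) = \<tau> (b j)"
      by (rule swap_auts_agree_on_j[OF \<sigma> \<tau> eq_i])
    define c where "c = \<sigma> (b i) * \<sigma> (b j) * (b 1 * b 2 * b 3)"
    have "\<sigma> (b i) * \<sigma> (b j) * \<sigma> (b ?k) * (b 1 * b 2 * b 3) = 1"
      using swap_aut.image_product_times_product[OF \<sigma> \<open>odd q\<close> norm]
      unfolding prod_third_index[OF ij, of "\<lambda>n. \<sigma> (b n)"] .
    then have "c * \<sigma> (b ?k) = 1"
      unfolding c_def by (simp add: ac_simps)
    have "\<tau> (b i) * \<tau> (b j) * \<tau> (b ?k) * (b 1 * b 2 * b 3) = 1"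
      using swap_aut.image_product_times_product[OF \<tau> \<open>odd q\<close> norm]
      unfolding prod_third_index[OF ij, of "\<lambda>n. \<tau> (b n)"] .
    then have "c * \<tau> (b ?k) = 1"
      unfolding c_def eq_i eq_j by (simp add: ac_simps)
    with \<open>c * \<sigma> (b ?k) = 1\<close> have "\<sigma> (b ?k) = \<tau> (b ?k)"
      by (metis inverse_unique)
    then show "\<sigma> = \<tau>"
      by (rule swap_auts_eqI[OF \<sigma> \<tau> eq_i])
  qed
  moreover have "(\<lambda>\<sigma>. \<sigma> (b i)) ` swap_auts \<zeta> a b i j \<subseteq> {z. z ^ q = a j}"
    using swap_aut.power_image_i swap_autI ij by blast
  ultimately have "card (swap_auts \<zeta> a b i j) \<le> card {z. z ^ q = a j}"
    using q_pos by (intro card_inj_on_le) auto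
  also have "\<dots> \<le> q"
    by (rule card_nth_roots_le[OF q_pos])
  finally show ?thesis .
qed

lemma card_setC_le_square: "card (setC \<zeta> a b) \<le> 6 * q ^ 2"
  by (rule card_setC_le) (auto simp: index_pairs_def intro: card_swap_auts_le_square)

lemma card_setC_le_linear:
  assumes "odd q" and "a 1 * a 2 * a 3 \<in> {1, -1}"
  shows "card (setC \<zeta> a b) \<le> 6 * q"
  using card_swap_auts_le[OF _ _ _ assms] by (intro card_setC_le) (auto simp: index_pairs_def)

lemma card_setC_le_linear_prime:
  assumes "prime q" and norm: "a 1 * a 2 * a 3 \<in> {1, -1}"
  shows "card (setC \<zeta> a b) \<le> 12 * q"
proof (cases "q = 2")
  case True
  then show ?thesis
    using card_setC_le_square by simp
next
  case False
  then have "odd q"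
    using \<open>prime q\<close> prime_ge_2_nat[of q] prime_odd_nat[of q] by simp
  then show ?thesis
    using card_setC_le_linear[OF _ norm] by simp
qed

end

lemma cubic_roots_sum_prod_Rats:
  fixes p :: "rat poly" and a :: "nat \<Rightarrow> complex"
  assumes "map_poly of_rat p = (\<Prod>i\<in>{1::nat,2,3}. [:- a i, 1:])"
  shows "a 1 + a 2 + a 3 \<in> \<rat>" and "a 1 * a 2 * a 3 \<in> \<rat>"
proof -
  have coeff_Rats: "coeff (\<Prod>i\<in>{1::nat,2,3}. [:- a i, 1:]) n \<in> \<rat>" for n
    unfolding assms[symmetric] by (simp add: coeff_map_poly)
  have "coeff (\<Prod>i\<in>{1::nat,2,3}. [:- a i, 1:]) 2 = - (a 1 + a 2 + a 3)"
    and "coeff (\<Prod>i\<in>{1::nat,2,3}. [:- a i, 1:]) 0 = - (a 1 * a 2 * a 3)"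
    by (simp_all add: numeral_2_eq_2 algebra_simps)
  with coeff_Rats[of 2] coeff_Rats[of 0]
  show "a 1 + a 2 + a 3 \<in> \<rat>" and "a 1 * a 2 * a 3 \<in> \<rat>"
    by (metis minus_minus Rats_minus_iff)+
qed

lemma Rats_norm_eq_1:
  fixes x :: complex
  assumes "x \<in> \<rat>" and "cmod x = 1"
  shows "x \<in> {1, -1}"
proof -
  from assms(1) obtain m n where "n > 0" and x: "x = of_int m / of_int n"
    by (cases rule: Rats_cases') auto
  with assms(2) have "\<bar>m\<bar> = n"
    by (simp add: norm_divide)
  with \<open>n > 0\<close> show ?thesis
    unfolding x by (auto simp: abs_if split: if_splits)
qed

theorem lemma7p1:
  fixes p :: "rat poly" and a :: "nat \<Rightarrow> complex"
  assumes irr: "irreducible p" and deg: "degree p = 3"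
    and conj: "map_poly of_rat p = (\<Prod>i\<in>{1::nat,2,3}. [:- a i, 1:])"
  shows "(\<exists>c::real. \<forall>(q::nat) (\<zeta>::complex) (b::nat \<Rightarrow> complex).
            prime q \<and> \<zeta> ^ q = 1 \<and> (\<forall>k. 0 < k \<and> k < q \<longrightarrow> \<zeta> ^ k \<noteq> 1) \<and>
            (\<forall>i\<in>{1,2,3}. b i ^ q = a i)
            \<longrightarrow> real (card (setC \<zeta> a b)) \<le> c * real q ^ 2)
       \<and> (cmod (a 1 * a 2 * a 3) = 1 \<longrightarrow>
          (\<exists>c::real. \<forall>(q::nat) (\<zeta>::complex) (b::nat \<Rightarrow> complex).
            prime q \<and> \<zeta> ^ q = 1 \<and> (\<forall>k. 0 < k \<and> k < q \<longrightarrow> \<zeta> ^ k \<noteq> 1) \<and>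
            (\<forall>i\<in>{1,2,3}. b i ^ q = a i)
            \<longrightarrow> real (card (setC \<zeta> a b)) \<le> c * real q))"
proof -
  have trace: "a 1 + a 2 + a 3 \<in> \<rat>" and norm_Rats: "a 1 * a 2 * a 3 \<in> \<rat>"
    using cubic_roots_sum_prod_Rats[OF conj] by auto
  have kummer: "kummer_generators q \<zeta> a b"
    if "prime q" "primitive_root_unity q \<zeta>" "\<forall>i\<in>{1,2,3}. b i ^ q = a i" for q \<zeta> b
    using that trace by unfold_locales (auto simp: prime_gt_0_nat)
  have "real (card (setC \<zeta> a b)) \<le> 6 * real q ^ 2"
    if "prime q" "primitive_root_unity q \<zeta>" "\<forall>i\<in>{1,2,3}. b i ^ q = a i" for q \<zeta> b
    using of_nat_mono[where 'a = real, OF kummer_generators.card_setC_le_square[OF kummer[OF that]]]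
    by simp
  moreover have "real (card (setC \<zeta> a b)) \<le> 12 * real q"
    if "cmod (a 1 * a 2 * a 3) = 1" and
      "prime q" "primitive_root_unity q \<zeta>" "\<forall>i\<in>{1,2,3}. b i ^ q = a i" for q \<zeta> b
    using of_nat_mono[where 'a = real, OF kummer_generators.card_setC_le_linear_prime[OF
          kummer[OF that(2-4)] that(2) Rats_norm_eq_1[OF norm_Rats that(1)]]]
    by simp
  ultimately show ?thesis
    unfolding primitive_root_unity_def by blast
qed

end
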